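(* For every $\pi\in\mathfrak{S}_n$, as polynomials in $x$, \[\Omega^{(\ell)}(\pi;x)=\Omega^{(r)}(\pi\eta;x),\qquad \Omega'(\pi;x)=\overline{\Omega}'(\eta\pi;x),\] where $\eta\in\mathfrak{S}_n$ is the involution $\eta(i)=n+1-i$.
   Context: $\mathfrak{S}_n$ is the symmetric group on $[n]$, permutations are words $(\pi(1),\dots,\pi(n))$, products are compositions, so $\pi\eta=(\pi(n),\dots,\pi(1))$ and $(\eta\pi)(i)=n+1-\pi(i)$. Let $Z$ be a finite totally ordered set each of whose elements is "plus-type" or "minus-type". For $\pi\in\mathfrak{S}_n$ let $N(\pi;Z)$ be the number of sequences $(a_1,\dots,a_n)\in Z^n$ with $a_1\le\dots\le a_n$ such that for every $s\in[n-1]$: if $\pi(s)<\pi(s+1)$ then $a_s<a_{s+1}$ or ($a_s=a_{s+1}$ is plus-type); if $\pi(s)>\pi(s+1)$ then $a_s<a_{s+1}$ or ($a_s=a_{s+1}$ is minus-type). For a positive integer $k$: $\Omega'(\pi;k)=N(\pi;\{\bar1<1<\dots<\bar k<k\})$; $\overline{\Omega}'(\pi;k)=N(\pi;\{0<\bar1<1<\dots<\overline{k-1}<k-1<\bar k\})$; $\Omega^{(\ell)}(\pi;k)=N(\pi;\{0<\bar1<1<\dots<\bar k<k\})$; $\Omega^{(r)}(\pi;k)=N(\pi;\{\bar1<1<\dots<\bar k<k<\overline{k+1}\})$; here $0$ and unbarred $j$ are plus-type and barred $\bar j$ minus-type. Each is, as a function of $k$, the restriction of a unique polynomial with rational coefficients,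 denoted by the same symbol. *)

theory Defs
  imports "HOL-Computational_Algebra.Polynomial" "HOL-Combinatorics.Permutations"
begin

text \<open>Permutations of [n] are functions sigma :: nat => nat with sigma permutes {1..n};
  the word of sigma is (sigma 1, ..., sigma n).  Products are compositions.\<close>

definition eta :: "nat \<Rightarrow> nat \<Rightarrow> nat" where
  "eta n i = (if i \<in> {1..n} then n + 1 - i else i)"

text \<open>Sequences
  (a_1,...,a_n) are represented by functions on {1..n}, extended by undefined.\<close>

definition Ncount :: "nat \<Rightarrow> (nat \<Rightarrow> nat) \<Rightarrow> 'z::linorder set \<Rightarrow> ('z \<Rightarrow> bool) \<Rightarrow> nat" where
  "Ncount n \<sigma> Z isplus = card {a :: nat \<Rightarrow> 'z.
      (\<forall>i\<in>{1..n}. a i \<in> Z) \<and> (\<forall>i. i \<notin> {1..n} \<longrightarrow> a i = undefined) \<and>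
      (\<forall>s\<in>{1..<n}. a s \<le> a (s+1)) \<and>
      (\<forall>s\<in>{1..<n}. \<sigma> s < \<sigma> (s+1) \<longrightarrow> a s < a (s+1) \<or> (a s = a (s+1) \<and> isplus (a s))) \<and>
      (\<forall>s\<in>{1..<n}. \<sigma> s > \<sigma> (s+1) \<longrightarrow> a s < a (s+1) \<or> (a s = a (s+1) \<and> \<not> isplus (a s)))}"

text \<open>Encoding of the alphabets as natural numbers: 0 ~ 0, bar j ~ 2j-1, j ~ 2j.
  This is order preserving; plus-type elements (0 and unbarred j) are the even ones.\<close>

definition Omega' :: "nat \<Rightarrow> (nat \<Rightarrow> nat) \<Rightarrow> nat \<Rightarrow> nat" where
  "Omega' n \<sigma> k = Ncount n \<sigma> {1..2*k} even"          \<comment> \<open>{bar1<1<...<bark<k}\<close>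

definition Omegabar' :: "nat \<Rightarrow> (nat \<Rightarrow> nat) \<Rightarrow> nat \<Rightarrow> nat" where
  "Omegabar' n \<sigma> k = Ncount n \<sigma> {0..2*k-1} even"     \<comment> \<open>{0<bar1<1<...<k-1<bark}\<close>

definition Omega_l :: "nat \<Rightarrow> (nat \<Rightarrow> nat) \<Rightarrow> nat \<Rightarrow> nat" where
  "Omega_l n \<sigma> k = Ncount n \<sigma> {0..2*k} even"         \<comment> \<open>{0<bar1<1<...<bark<k}\<close>

definition Omega_r :: "nat \<Rightarrow> (nat \<Rightarrow> nat) \<Rightarrow> nat \<Rightarrow> nat" where
  "Omega_r n \<sigma> k = Ncount n \<sigma> {1..2*k+1} even"       \<comment> \<open>{bar1<1<...<k<bar(k+1)}\<close>

definition as_poly :: "(nat \<Rightarrow> nat) \<Rightarrow> rat poly" where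
  "as_poly f = (THE p. \<forall>k::nat. k > 0 \<longrightarrow> poly p (of_nat k) = of_nat (f k))"

end

theory Submission
  imports Defs
begin

(* Both identities are bijections between the underlying sets of sequences.  For the first,
   read (a_1, ..., a_n) backwards and relabel by the order-reversing map z |-> 2k+1-z of the
   encoded alphabet: ascents of pi become descents of pi eta, and since the map flips parity it
   also swaps plus- and minus-type, so that {0 < bar 1 < ... < k} becomes
   {bar 1 < 1 < ... < k < bar(k+1)}.  For the second, eta pi has its descents exactly where pi
   has its ascents, so swapping the type of every letter and shifting the encoded alphabet down
   by one turns {bar 1 < 1 < ... < k} into {0 < bar 1 < ... < bar k}. *)

definition compatible_seqs ::
    "nat \<Rightarrow> (nat \<Rightarrow> nat) \<Rightarrow> 'z::linorder set \<Rightarrow> ('z \<Rightarrow> bool) \<Rightarrow> (nat \<Rightarrow> 'z) set" where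
  "compatible_seqs n \<sigma> Z isplus = {a.
      (\<forall>i\<in>{1..n}. a i \<in> Z) \<and> (\<forall>i. i \<notin> {1..n} \<longrightarrow> a i = undefined) \<and>
      (\<forall>s\<in>{1..<n}. a s \<le> a (s+1)) \<and>
      (\<forall>s\<in>{1..<n}. \<sigma> s < \<sigma> (s+1) \<longrightarrow> a s < a (s+1) \<or> (a s = a (s+1) \<and> isplus (a s))) \<and>
      (\<forall>s\<in>{1..<n}. \<sigma> s > \<sigma> (s+1) \<longrightarrow> a s < a (s+1) \<or> (a s = a (s+1) \<and> \<not> isplus (a s)))}"

lemma Ncount_eq_card: "Ncount n \<sigma> Z isplus = card (compatible_seqs n \<sigma> Z isplus)"
  unfolding Ncount_def compatible_seqs_def ..

lemma compatible_seqs_values: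
  assumes "a \<in> compatible_seqs n \<sigma> Z isplus"
  shows "i \<in> {1..n} \<Longrightarrow> a i \<in> Z" and "i \<notin> {1..n} \<Longrightarrow> a i = undefined"
  using assms unfolding compatible_seqs_def by auto

lemma eta_involution: "eta n (eta n i) = i"
  unfolding eta_def by auto

lemma eta_reverses_order: "i \<in> {1..n} \<Longrightarrow> j \<in> {1..n} \<Longrightarrow> eta n i < eta n j \<longleftrightarrow> j < i"
  unfolding eta_def by auto

lemma strict_mono_on_inv_into:
  fixes f :: "'a::linorder \<Rightarrow> 'b::linorder"
  assumes "strict_mono_on Z f"
  shows "strict_mono_on (f ` Z) (inv_into Z f)"
  using assms strict_mono_on_imp_inj_on[OF assms]
  by (auto intro!: monotone_onI simp: strict_mono_on_less)

lemma strict_antimono_on_less_iff: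
  fixes f :: "'a::linorder \<Rightarrow> 'b::linorder"
  assumes "strict_antimono_on Z f" "x \<in> Z" "y \<in> Z"
  shows "f x < f y \<longleftrightarrow> y < x"
  using assms by (metis linorder_neqE monotone_onD order.asym)

lemma strict_antimono_on_inv_into:
  fixes f :: "'a::linorder \<Rightarrow> 'b::linorder"
  assumes "strict_antimono_on Z f"
  shows "strict_antimono_on (f ` Z) (inv_into Z f)"
  using assms strict_antimono_iff_antimono[of Z f]
  by (auto intro!: monotone_onI simp: strict_antimono_on_less_iff)

definition relabel :: "nat \<Rightarrow> ('z \<Rightarrow> 'w) \<Rightarrow> (nat \<Rightarrow> 'z) \<Rightarrow> nat \<Rightarrow> 'w" where
  "relabel n f a i = (if i \<in> {1..n} then f (a i) else undefined)"

lemma relabel_relabel: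
  assumes "a \<in> compatible_seqs n \<sigma> Z isplus" "\<forall>z\<in>Z. g (f z) = z"
  shows "relabel n g (relabel n f a) = a"
  using assms compatible_seqs_values[OF assms(1)] unfolding relabel_def by auto

lemma relabel_comp_eta: "relabel n f (a \<circ> eta n) \<circ> eta n = relabel n f a"
  by (auto simp: fun_eq_iff relabel_def eta_def)

lemma relabel_mem_compatible_seqs:
  assumes f: "strict_mono_on Z f" and Q: "\<forall>z\<in>Z. Q (f z) = P z"
    and a: "a \<in> compatible_seqs n \<sigma> Z P"
  shows "relabel n f a \<in> compatible_seqs n \<sigma> (f ` Z) Q"
proof -
  have "a s \<in> Z" "a (s+1) \<in> Z" if "s \<in> {1..<n}" for s
    using compatible_seqs_values[OF a] that by auto
  then show ?thesis
    using a Q unfolding compatible_seqs_def relabel_def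
    by (auto simp: strict_mono_on_less[OF f] strict_mono_on_leD[OF f])
qed

lemma reverse_relabel_mem_compatible_seqs:
  assumes f: "strict_antimono_on Z f" and Q: "\<forall>z\<in>Z. Q (f z) = (\<not> P z)"
    and a: "a \<in> compatible_seqs n \<sigma> Z P"
  shows "relabel n f (a \<circ> eta n) \<in> compatible_seqs n (\<sigma> \<circ> eta n) (f ` Z) Q"
proof -
  let ?b = "relabel n f (a \<circ> eta n)"
  note less_iff = strict_antimono_on_less_iff[OF f]
  have le_iff: "f x \<le> f y \<longleftrightarrow> y \<le> x" if "x \<in> Z" "y \<in> Z" for x y
    using less_iff[OF that] less_iff[OF that(2,1)] by (metis linorder_not_le)
  have mirror: "?b s = f (a (t + 1)) \<and> ?b (s + 1) = f (a t) \<and>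
      (\<sigma> \<circ> eta n) s = \<sigma> (t + 1) \<and> (\<sigma> \<circ> eta n) (s + 1) = \<sigma> t \<and>
      t \<in> {1..<n} \<and> a t \<in> Z \<and> a (t + 1) \<in> Z"
    if "s \<in> {1..<n}" "t = n - s" for s t
    using that compatible_seqs_values(1)[OF a, of t] compatible_seqs_values(1)[OF a, of "t+1"]
    unfolding relabel_def eta_def by (auto simp: Suc_diff_le)
  have ascent: "\<sigma> t < \<sigma> (t+1) \<longrightarrow> a t < a (t+1) \<or> (a t = a (t+1) \<and> P (a t))"
    and descent: "\<sigma> t > \<sigma> (t+1) \<longrightarrow> a t < a (t+1) \<or> (a t = a (t+1) \<and> \<not> P (a t))"
    and weak: "a t \<le> a (t+1)" if "t \<in> {1..<n}" for t
    using a that unfolding compatible_seqs_def by auto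
  show ?thesis
    unfolding compatible_seqs_def mem_Collect_eq
  proof (intro conjI ballI allI impI)
    fix i assume i: "i \<in> {1..n}"
    then have "eta n i \<in> {1..n}" by (auto simp: eta_def)
    then show "?b i \<in> f ` Z"
      using compatible_seqs_values(1)[OF a] i unfolding relabel_def by auto
  next
    fix i assume "i \<notin> {1..n}"
    then show "?b i = undefined" unfolding relabel_def by auto
  next
    fix s assume "s \<in> {1..<n}"
    from mirror[OF this refl] show "?b s \<le> ?b (s+1)"
      using weak[of "n - s"] le_iff by auto
  next
    fix s assume "s \<in> {1..<n}" "(\<sigma> \<circ> eta n) s < (\<sigma> \<circ> eta n) (s+1)"
    with mirror[OF this(1) refl] show "?b s < ?b (s+1) \<or> (?b s = ?b (s+1) \<and> Q (?b s))"
      using descent[of "n - s"] less_iff Q by auto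
  next
    fix s assume "s \<in> {1..<n}" "(\<sigma> \<circ> eta n) s > (\<sigma> \<circ> eta n) (s+1)"
    with mirror[OF this(1) refl] show "?b s < ?b (s+1) \<or> (?b s = ?b (s+1) \<and> \<not> Q (?b s))"
      using ascent[of "n - s"] less_iff Q by auto
  qed
qed

lemma Ncount_relabel:
  fixes f :: "'z::linorder \<Rightarrow> 'w::linorder"
  assumes f: "strict_mono_on Z f" and Q: "\<forall>z\<in>Z. Q (f z) = P z"
  shows "Ncount n \<sigma> Z P = Ncount n \<sigma> (f ` Z) Q"
proof -
  let ?g = "inv_into Z f"
  have inj: "inj_on f Z" using f by (rule strict_mono_on_imp_inj_on)
  have P: "\<forall>w\<in>f ` Z. P (?g w) = Q w" using Q inj by auto
  have "bij_betw (relabel n f) (compatible_seqs n \<sigma> Z P) (compatible_seqs n \<sigma> (f ` Z) Q)"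
  proof (rule bij_betw_byWitness[where f' = "relabel n ?g"])
    show "\<forall>a\<in>compatible_seqs n \<sigma> Z P. relabel n ?g (relabel n f a) = a"
      using relabel_relabel inj by (metis inv_into_f_f)
    show "\<forall>b\<in>compatible_seqs n \<sigma> (f ` Z) Q. relabel n f (relabel n ?g b) = b"
      using relabel_relabel by (metis f_inv_into_f)
    show "relabel n f ` compatible_seqs n \<sigma> Z P \<subseteq> compatible_seqs n \<sigma> (f ` Z) Q"
      using relabel_mem_compatible_seqs[OF f Q] by blast
    show "relabel n ?g ` compatible_seqs n \<sigma> (f ` Z) Q \<subseteq> compatible_seqs n \<sigma> Z P"
      using relabel_mem_compatible_seqs[OF strict_mono_on_inv_into[OF f] P] inj by auto
  qed
  then show ?thesis unfolding Ncount_eq_card by (rule bij_betw_same_card)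
qed

lemma Ncount_reverse_relabel:
  fixes f :: "'z::linorder \<Rightarrow> 'w::linorder"
  assumes f: "strict_antimono_on Z f" and Q: "\<forall>z\<in>Z. Q (f z) = (\<not> P z)"
  shows "Ncount n \<sigma> Z P = Ncount n (\<sigma> \<circ> eta n) (f ` Z) Q"
proof -
  let ?g = "inv_into Z f"
  have inj: "inj_on f Z" using f strict_antimono_iff_antimono by blast
  have P: "\<forall>w\<in>f ` Z. P (?g w) = (\<not> Q w)" using Q inj by auto
  have \<sigma>: "\<sigma> \<circ> eta n \<circ> eta n = \<sigma>" by (simp add: fun_eq_iff eta_involution)
  have "bij_betw (\<lambda>a. relabel n f (a \<circ> eta n))
      (compatible_seqs n \<sigma> Z P) (compatible_seqs n (\<sigma> \<circ> eta n) (f ` Z) Q)"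
  proof (rule bij_betw_byWitness[where f' = "\<lambda>b. relabel n ?g (b \<circ> eta n)"])
    show "\<forall>a\<in>compatible_seqs n \<sigma> Z P. relabel n ?g (relabel n f (a \<circ> eta n) \<circ> eta n) = a"
      using relabel_relabel inj by (metis inv_into_f_f relabel_comp_eta)
    show "\<forall>b\<in>compatible_seqs n (\<sigma> \<circ> eta n) (f ` Z) Q.
        relabel n f (relabel n ?g (b \<circ> eta n) \<circ> eta n) = b"
      using relabel_relabel by (metis f_inv_into_f relabel_comp_eta)
    show "(\<lambda>a. relabel n f (a \<circ> eta n)) ` compatible_seqs n \<sigma> Z P
        \<subseteq> compatible_seqs n (\<sigma> \<circ> eta n) (f ` Z) Q"
      using reverse_relabel_mem_compatible_seqs[OF f Q] by blast
    show "(\<lambda>b. relabel n ?g (b \<circ> eta n)) ` compatible_seqs n (\<sigma> \<circ> eta n) (f ` Z) Q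
        \<subseteq> compatible_seqs n \<sigma> Z P"
      using reverse_relabel_mem_compatible_seqs[OF strict_antimono_on_inv_into[OF f] P,
          of _ n "\<sigma> \<circ> eta n"] inj
      by (auto simp: \<sigma>)
  qed
  then show ?thesis unfolding Ncount_eq_card by (rule bij_betw_same_card)
qed

lemma Ncount_swap_types:
  assumes "\<forall>s\<in>{1..<n}. (\<tau> s < \<tau> (s+1) \<longleftrightarrow> \<sigma> (s+1) < \<sigma> s) \<and>
                           (\<tau> (s+1) < \<tau> s \<longleftrightarrow> \<sigma> s < \<sigma> (s+1))"
  shows "Ncount n \<sigma> Z P = Ncount n \<tau> Z (\<lambda>z. \<not> P z)"
  unfolding Ncount_def using assms by (intro arg_cong[where f = card] Collect_cong) auto

lemma image_reflect_atLeastAtMost_nat: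
  fixes a b c :: nat
  assumes "a \<le> b" "b \<le> c"
  shows "(\<lambda>z. c - z) ` {a..b} = {c - b..c - a}"
proof
  show "{c - b..c - a} \<subseteq> (\<lambda>z. c - z) ` {a..b}"
  proof
    fix x assume "x \<in> {c - b..c - a}"
    then have "c - x \<in> {a..b}" and "x = c - (c - x)" using assms by auto
    then show "x \<in> (\<lambda>z. c - z) ` {a..b}" by (rule rev_image_eqI)
  qed
qed auto

lemma as_poly_cong: "(\<And>k. k > 0 \<Longrightarrow> f k = g k) \<Longrightarrow> as_poly f = as_poly g"
  unfolding as_poly_def by metis

lemma Omega_l_eq_Omega_r_comp_eta: "Omega_l n \<sigma> k = Omega_r n (\<sigma> \<circ> eta n) k"
proof -
  have "Ncount n \<sigma> {0..2*k} even = Ncount n (\<sigma> \<circ> eta n) ((\<lambda>z. 2*k + 1 - z) ` {0..2*k}) even"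
    by (rule Ncount_reverse_relabel) (auto intro!: monotone_onI)
  then show ?thesis
    by (simp add: Omega_l_def Omega_r_def image_reflect_atLeastAtMost_nat)
qed

lemma Omega'_eq_Omegabar'_eta_comp:
  assumes \<sigma>: "\<forall>i\<in>{1..n}. \<sigma> i \<in> {1..n}" and "k > 0"
  shows "Omega' n \<sigma> k = Omegabar' n (eta n \<circ> \<sigma>) k"
proof -
  have "Ncount n \<sigma> {1..2*k} even = Ncount n (eta n \<circ> \<sigma>) {1..2*k} (\<lambda>z. \<not> even z)"
    by (rule Ncount_swap_types) (use \<sigma> in \<open>auto simp: eta_reverses_order\<close>)
  also have "\<dots> = Ncount n (eta n \<circ> \<sigma>) ((\<lambda>z. z + 1) ` {0..2*k - 1}) (\<lambda>z. \<not> even z)"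
    using \<open>k > 0\<close> by simp
  also have "\<dots> = Ncount n (eta n \<circ> \<sigma>) {0..2*k - 1} even"
    by (rule Ncount_relabel[symmetric]) (auto intro: strict_mono_onI)
  finally show ?thesis
    unfolding Omega'_def Omegabar'_def .
qed

theorem proposition4p7:
  fixes n :: nat and \<sigma> :: "nat \<Rightarrow> nat"
  assumes "\<sigma> permutes {1..n}"
  shows "as_poly (Omega_l n \<sigma>) = as_poly (Omega_r n (\<sigma> \<circ> eta n)) \<and>
         as_poly (Omega' n \<sigma>) = as_poly (Omegabar' n (eta n \<circ> \<sigma>))"
proof
  show "as_poly (Omega_l n \<sigma>) = as_poly (Omega_r n (\<sigma> \<circ> eta n))"
    by (intro as_poly_cong Omega_l_eq_Omega_r_comp_eta)
  have "\<forall>i\<in>{1..n}. \<sigma> i \<in> {1..n}"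
    using permutes_in_image[OF assms] by blast
  then show "as_poly (Omega' n \<sigma>) = as_poly (Omegabar' n (eta n \<circ> \<sigma>))"
    by (intro as_poly_cong Omega'_eq_Omegabar'_eta_comp)
qed

end
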